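(* Let $\gamma\ge2$. For every $G\in\mathcal S(\mathbb R)$, $$\lim_{n\to\infty}\frac{[\Theta(n)]^2}{n^2}\Big\{\sum_{x,y\in\mathbb Z}[G(\tfrac yn)-G(\tfrac xn)]^4p^2(y-x)+\sum_{x\in\mathbb Z}\Big[\sum_{y\in\mathbb Z}p(y-x)[G(\tfrac yn)-G(\tfrac xn)]^2\Big]^2\Big\}=0.$$
   Context: Let $p(0)=0$, $p(x)=c_\gamma|x|^{-\gamma-1}$ for $x\ne0$, with $c_\gamma$ the constant making $\sum_xp(x)=1$. $\Theta(n)=n^2$ if $\gamma>2$ and $\Theta(n)=n^2/\log n$ if $\gamma=2$. $\mathcal S(\mathbb R)$ is the Schwartz space. *)

theory Defs
  imports "HOL-Analysis.Analysis"
begin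

text \<open>Normalising constant c_gamma: makes sum over x in Z of p(x) equal to 1.\<close>
definition c_gamma :: "real \<Rightarrow> real" where
  "c_gamma \<gamma> = 1 / (\<Sum>\<^sub>\<infinity>x\<in>(UNIV - {0::int}). \<bar>real_of_int x\<bar> powr (-\<gamma> - 1))"

definition jump_p :: "real \<Rightarrow> int \<Rightarrow> real" where
  "jump_p \<gamma> x = (if x = 0 then 0 else c_gamma \<gamma> * \<bar>real_of_int x\<bar> powr (-\<gamma> - 1))"

definition Theta :: "real \<Rightarrow> nat \<Rightarrow> real" where
  "Theta \<gamma> n = (if \<gamma> > 2 then (real n)\<^sup>2 else (real n)\<^sup>2 / ln (real n))"

definition schwartz :: "(real \<Rightarrow> real) \<Rightarrow> bool" where
  "schwartz G \<longleftrightarrow>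
     (\<forall>j x. ((deriv ^^ j) G) differentiable (at x)) \<and>
     (\<forall>j k. bounded (range (\<lambda>x. x ^ k * (deriv ^^ j) G x)))"

end

theory Submission
  imports Defs "HOL-Real_Asymp.Real_Asymp"
begin

text \<open>
  Put g(x,y) = p(y - x) (G(y/n) - G(x/n))^2 and \<phi>(t) = 1/(1 + t^2). For \<gamma> \<ge> 2 we have
  p(z) = O(|z|^-3), and G and G' are O(\<phi>), so the mean value theorem gives
  g(x,y) = O(min(1, (z/n)^2) |z|^-3 (\<phi>(x/n) + \<phi>(y/n))) with z = y - x.
  Since \<Sum>_z min(1, (z/n)^2) |z|^-3 = O(log n / n^2) and \<Sum>_x \<phi>(x/n) = O(n), the total
  mass of g is O(log n / n), each row of g has mass O(log n / n^2) and each entry is O(1/n^2).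
  The first sum is at most (largest entry) \<times> (total mass) and the second at most
  (largest row mass) \<times> (total mass); both are O((log n)^2 / n^3), while
  \<Theta>(n)^2 / n^2 \<le> n^2.
\<close>

section \<open>Decay of Schwartz functions\<close>

definition lorentzian :: "real \<Rightarrow> real" where
  "lorentzian t = 1 / (1 + t\<^sup>2)"

lemma lorentzian_pos: "lorentzian t > 0"
  unfolding lorentzian_def by (simp add: add_pos_nonneg)

lemma lorentzian_le_1: "lorentzian t \<le> 1"
  unfolding lorentzian_def by (simp add: divide_le_eq add_pos_nonneg)

lemma lorentzian_le_shift:
  assumes "\<bar>\<xi> - u\<bar> \<le> 1"
  shows "lorentzian \<xi> \<le> 3 * lorentzian u"
proof -
  have "(u - \<xi>)\<^sup>2 \<le> 1"
    using assms abs_le_square_iff[of "\<xi> - u" 1] by (simp add: power2_commute)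
  moreover have "u\<^sup>2 \<le> 2 * \<xi>\<^sup>2 + 2 * (u - \<xi>)\<^sup>2"
    using sum_squares_ge_zero[of "\<xi> - (u - \<xi>)" 0] by (simp add: power2_eq_square algebra_simps)
  ultimately have "1 + u\<^sup>2 \<le> 3 * (1 + \<xi>\<^sup>2)"
    using zero_le_power2[of \<xi>] by (smt (verit))
  then show ?thesis
    unfolding lorentzian_def by (simp add: field_simps add_pos_nonneg)
qed

lemma abs_le_lorentzian:
  fixes F :: "real \<Rightarrow> real"
  assumes "bounded (range F)" "bounded (range (\<lambda>t. t\<^sup>2 * F t))"
  shows "\<exists>K. \<forall>t. \<bar>F t\<bar> \<le> K * lorentzian t"
proof -
  obtain a where a: "\<And>t. \<bar>F t\<bar> \<le> a"
    using assms(1) unfolding bounded_iff by auto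
  obtain b where b: "\<And>t. \<bar>t\<^sup>2 * F t\<bar> \<le> b"
    using assms(2) unfolding bounded_iff by auto
  have "\<bar>F t\<bar> \<le> (a + b) * lorentzian t" for t
  proof -
    have "(1 + t\<^sup>2) * \<bar>F t\<bar> = \<bar>F t\<bar> + \<bar>t\<^sup>2 * F t\<bar>"
      by (simp add: algebra_simps abs_mult)
    also have "\<dots> \<le> a + b"
      using a[of t] b[of t] by simp
    finally show ?thesis
      unfolding lorentzian_def by (simp add: field_simps add_pos_nonneg)
  qed
  then show ?thesis by blast
qed

lemma schwartz_has_real_derivative:
  assumes "schwartz G"
  shows "(G has_real_derivative deriv G x) (at x)"
  using assms unfolding schwartz_def DERIV_deriv_iff_real_differentiable by (metis funpow_0)

lemma schwartz_le_lorentzian: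
  assumes "schwartz G"
  shows "\<exists>K. \<forall>t. \<bar>G t\<bar> \<le> K * lorentzian t \<and> \<bar>deriv G t\<bar> \<le> K * lorentzian t"
proof -
  have "bounded (range (\<lambda>t. t ^ k * (deriv ^^ j) G t))" for j k
    using assms unfolding schwartz_def by blast
  from this[of 0 0] this[of 2 0] this[of 0 1] this[of 2 1]
  obtain K0 K1 where "\<And>t. \<bar>G t\<bar> \<le> K0 * lorentzian t" "\<And>t. \<bar>deriv G t\<bar> \<le> K1 * lorentzian t"
    using abs_le_lorentzian[of G] abs_le_lorentzian[of "deriv G"] by auto
  then have "\<bar>G t\<bar> \<le> max K0 K1 * lorentzian t \<and> \<bar>deriv G t\<bar> \<le> max K0 K1 * lorentzian t" for t
    using lorentzian_pos[of t] by (meson max.cobounded1 max.cobounded2 mult_right_mono order.trans less_imp_le)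
  then show ?thesis by blast
qed

lemma increment_abs_le_lorentzian:
  fixes G G' :: "real \<Rightarrow> real"
  assumes deriv: "\<And>x. (G has_real_derivative G' x) (at x)"
    and G': "\<And>t. \<bar>G' t\<bar> \<le> K * lorentzian t" and "K \<ge> 0" and "\<bar>h\<bar> \<le> 1"
  shows "\<bar>G (u + h) - G u\<bar> \<le> 3 * K * lorentzian u * \<bar>h\<bar>"
proof -
  have "norm (G (u + h) - G u) \<le> 3 * K * lorentzian u * norm ((u + h) - u)"
  proof (rule field_differentiable_bound[where S = "cball u 1" and f' = G'])
    fix z assume "z \<in> cball u 1"
    then have "lorentzian z \<le> 3 * lorentzian u"
      by (intro lorentzian_le_shift) (simp add: dist_real_def abs_minus_commute)
    then have "K * lorentzian z \<le> K * (3 * lorentzian u)"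
      using \<open>K \<ge> 0\<close> by (rule mult_left_mono)
    then show "norm (G' z) \<le> 3 * K * lorentzian u"
      using G'[of z] by simp
  qed (use \<open>\<bar>h\<bar> \<le> 1\<close> deriv in \<open>auto intro: has_field_derivative_at_within simp: dist_real_def\<close>)
  then show ?thesis
    by simp
qed

lemma increment_sq_le_lorentzian:
  fixes G G' :: "real \<Rightarrow> real"
  assumes deriv: "\<And>x. (G has_real_derivative G' x) (at x)"
    and G: "\<And>t. \<bar>G t\<bar> \<le> K * lorentzian t" and G': "\<And>t. \<bar>G' t\<bar> \<le> K * lorentzian t"
  shows "(G (u + h) - G u)\<^sup>2 \<le> 9 * K\<^sup>2 * min 1 (h\<^sup>2) * (lorentzian u + lorentzian (u + h))"
proof -
  have "0 \<le> K * lorentzian 0"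
    using G[of 0] by (rule order_trans[OF abs_ge_zero])
  then have K: "K \<ge> 0"
    using lorentzian_pos[of 0] by (simp add: zero_le_mult_iff)
  have sq_le: "(K * lorentzian t)\<^sup>2 \<le> K\<^sup>2 * lorentzian t" for t
  proof -
    have "(K * lorentzian t)\<^sup>2 = K\<^sup>2 * (lorentzian t * lorentzian t)"
      by (simp add: power2_eq_square)
    also have "\<dots> \<le> K\<^sup>2 * lorentzian t"
      using lorentzian_pos[of t] lorentzian_le_1[of t]
      by (intro mult_left_mono mult_left_le_one_le) auto
    finally show ?thesis .
  qed
  show ?thesis
  proof (cases "\<bar>h\<bar> \<le> 1")
    case True
    have "\<bar>G (u + h) - G u\<bar>\<^sup>2 \<le> (3 * K * lorentzian u * \<bar>h\<bar>)\<^sup>2"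
      using increment_abs_le_lorentzian[OF deriv G' K True] by (intro power_mono) auto
    then have "(G (u + h) - G u)\<^sup>2 \<le> 9 * h\<^sup>2 * (K * lorentzian u)\<^sup>2"
      by (simp add: power_mult_distrib mult_ac)
    also have "\<dots> \<le> 9 * h\<^sup>2 * (K\<^sup>2 * (lorentzian u + lorentzian (u + h)))"
      using sq_le[of u] lorentzian_pos[of "u + h"]
      by (intro mult_left_mono) (auto simp: distrib_left intro: order_trans)
    finally show ?thesis
      using True abs_le_square_iff[of h 1] by (simp add: min_def mult_ac)
  next
    case False
    have G_sq: "(G t)\<^sup>2 \<le> K\<^sup>2 * lorentzian t" for t
      using power_mono[OF G[of t] abs_ge_zero, of 2] sq_le[of t] by simp
    have "(G (u + h) - G u)\<^sup>2 \<le> 2 * (G (u + h))\<^sup>2 + 2 * (G u)\<^sup>2"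
      using sum_squares_ge_zero[of "G (u + h) + G u" 0] by (simp add: power2_eq_square algebra_simps)
    also have "\<dots> \<le> 2 * (K\<^sup>2 * lorentzian (u + h)) + 2 * (K\<^sup>2 * lorentzian u)"
      using G_sq[of u] G_sq[of "u + h"] by simp
    also have "\<dots> \<le> 9 * K\<^sup>2 * (lorentzian u + lorentzian (u + h))"
      using lorentzian_pos[of u] lorentzian_pos[of "u + h"] by (simp add: algebra_simps)
    finally show ?thesis
      using False abs_le_square_iff[of h 1] by (simp add: min_def)
  qed
qed

lemma schwartz_increment_sq_le:
  assumes "schwartz G"
  shows "\<exists>L\<ge>0. \<forall>u h. (G (u + h) - G u)\<^sup>2 \<le> L * min 1 (h\<^sup>2) * (lorentzian u + lorentzian (u + h))"
proof -
  obtain K where "\<And>t. \<bar>G t\<bar> \<le> K * lorentzian t" "\<And>t. \<bar>deriv G t\<bar> \<le> K * lorentzian t"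
    using schwartz_le_lorentzian[OF assms] by blast
  then show ?thesis
    using increment_sq_le_lorentzian[OF schwartz_has_real_derivative[OF assms]]
    by (intro exI[of _ "9 * K\<^sup>2"]) auto
qed

section \<open>Lattice sums\<close>

lemma sum_inverse_squares_tail_le:
  assumes "n \<ge> 1"
  shows "(\<Sum>k=Suc n..m. 1 / (real k)\<^sup>2) \<le> 1 / real n"
proof -
  have telescope: "(\<Sum>k=Suc n..m. 1 / (real k)\<^sup>2) \<le> 1 / real n - 1 / real m" if "m \<ge> n" for m
    using that
  proof (induction m rule: dec_induct)
    case base
    then show ?case by simp
  next
    case (step m)
    have m: "real m \<ge> 1"
      using step.hyps assms by simp
    have "1 / (real (Suc m))\<^sup>2 \<le> 1 / (real m * real (Suc m))"
      using m by (intro divide_left_mono) (auto simp: power2_eq_square)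
    also have "\<dots> = 1 / real m - 1 / real (Suc m)"
      using m by (simp add: field_simps)
    finally show ?case
      using step.IH step.hyps by simp
  qed
  show ?thesis
  proof (cases "m \<ge> n")
    case True
    then show ?thesis
      using telescope[OF True] by (smt (verit) divide_nonneg_nonneg of_nat_0_le_iff)
  qed simp
qed

lemma sum_le_head_plus_inverse_square_tail:
  fixes f h :: "nat \<Rightarrow> real"
  assumes "n \<ge> 1" "b \<ge> 0" and nonneg: "\<And>k. f k \<ge> 0"
    and head: "\<And>k. 1 \<le> k \<Longrightarrow> k \<le> n \<Longrightarrow> f k \<le> h k"
    and tail: "\<And>k. n < k \<Longrightarrow> f k \<le> b / (real k)\<^sup>2"
  shows "(\<Sum>k=1..m. f k) \<le> (\<Sum>k=1..n. h k) + b / real n"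
proof -
  have "(\<Sum>k=1..m. f k) \<le> (\<Sum>k\<in>{1..n} \<union> {Suc n..m}. f k)"
    by (rule sum_mono2) (use nonneg in auto)
  also have "\<dots> = (\<Sum>k=1..n. f k) + (\<Sum>k=Suc n..m. f k)"
    by (rule sum.union_disjoint) auto
  also have "(\<Sum>k=1..n. f k) \<le> (\<Sum>k=1..n. h k)"
    by (rule sum_mono) (use head in auto)
  also have "(\<Sum>k=Suc n..m. f k) \<le> (\<Sum>k=Suc n..m. b * (1 / (real k)\<^sup>2))"
    by (rule sum_mono) (use tail in auto)
  also have "\<dots> \<le> b * (1 / real n)"
    unfolding sum_distrib_left[symmetric]
    using sum_inverse_squares_tail_le[OF assms(1)] assms(2) by (rule mult_left_mono)
  finally show ?thesis by simp
qed

lemma sum_int_le_of_even: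
  fixes f :: "int \<Rightarrow> real"
  assumes "finite Z" and even: "\<And>k. f (-k) = f k" and nonneg: "\<And>k. f k \<ge> 0"
    and bound: "\<And>m. (\<Sum>k=1..m. f (int k)) \<le> B"
  shows "(\<Sum>z\<in>Z. f z) \<le> f 0 + 2 * B"
proof -
  have symmetric: "(\<Sum>z\<in>{-int m..int m}. f z) = f 0 + 2 * (\<Sum>k=1..m. f (int k))" for m
  proof (induction m)
    case (Suc m)
    have "{-int (Suc m)..int (Suc m)} = insert (-int (Suc m)) (insert (int (Suc m)) {-int m..int m})"
      by auto
    then show ?case
      using Suc even[of "int (Suc m)"] by simp
  qed simp
  define m where "m = nat (\<Sum>z\<in>Z. \<bar>z\<bar>)"
  have "Z \<subseteq> {-int m..int m}"
  proof
    fix z assume "z \<in> Z"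
    then have "\<bar>z\<bar> \<le> (\<Sum>z\<in>Z. \<bar>z\<bar>)"
      using assms(1) by (intro member_le_sum) auto
    then show "z \<in> {-int m..int m}"
      unfolding m_def by auto
  qed
  then have "(\<Sum>z\<in>Z. f z) \<le> (\<Sum>z\<in>{-int m..int m}. f z)"
    by (intro sum_mono2) (use nonneg in auto)
  also have "\<dots> \<le> f 0 + 2 * B"
    unfolding symmetric using bound[of m] by simp
  finally show ?thesis .
qed

lemma sum_lorentzian_lattice_le:
  assumes "n \<ge> 1" "finite X"
  shows "(\<Sum>x\<in>X. lorentzian (real_of_int (x + a) / real n)) \<le> 1 + 4 * real n"
proof -
  have tail: "lorentzian (real k / real n) \<le> (real n)\<^sup>2 / (real k)\<^sup>2" if "n < k" for k
  proof -
    have "lorentzian (real k / real n) = (real n)\<^sup>2 / ((real n)\<^sup>2 + (real k)\<^sup>2)"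
      using assms(1) by (simp add: lorentzian_def field_simps)
    also have "\<dots> \<le> (real n)\<^sup>2 / (real k)\<^sup>2"
      using that by (intro divide_left_mono) (auto intro!: mult_pos_pos add_nonneg_pos)
    finally show ?thesis .
  qed
  have "(\<Sum>x\<in>X. lorentzian (real_of_int (x + a) / real n))
      = (\<Sum>y\<in>(\<lambda>x. x + a) ` X. lorentzian (real_of_int y / real n))"
    by (simp add: sum.reindex inj_on_def)
  also have "\<dots> \<le> lorentzian (real_of_int 0 / real n) + 2 * (2 * real n)"
  proof (rule sum_int_le_of_even)
    fix m
    have "(\<Sum>k=1..m. lorentzian (real k / real n)) \<le> (\<Sum>k=1..n. 1) + (real n)\<^sup>2 / real n"
      using assms(1) lorentzian_le_1 lorentzian_pos tail
      by (intro sum_le_head_plus_inverse_square_tail) (auto intro: less_imp_le)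
    then show "(\<Sum>k=1..m. lorentzian (real_of_int (int k) / real n)) \<le> 2 * real n"
      using assms(1) by (simp add: power2_eq_square)
  qed (use assms lorentzian_pos in \<open>auto simp: lorentzian_def less_imp_le\<close>)
  finally show ?thesis
    by (simp add: lorentzian_def)
qed

definition jump_weight :: "nat \<Rightarrow> int \<Rightarrow> real" where
  "jump_weight n z = min 1 ((real_of_int z / real n)\<^sup>2) / \<bar>real_of_int z\<bar> ^ 3"

lemma jump_weight_nonneg: "jump_weight n z \<ge> 0"
  unfolding jump_weight_def by simp

lemma jump_weight_le:
  assumes "n \<ge> 1"
  shows "jump_weight n z \<le> 1 / (real n)\<^sup>2"
proof (cases "z = 0")
  case False
  then have z: "\<bar>real_of_int z\<bar> \<ge> 1"
    by linarith
  have "jump_weight n z \<le> (real_of_int z / real n)\<^sup>2 / \<bar>real_of_int z\<bar> ^ 3"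
    unfolding jump_weight_def by (simp add: divide_right_mono)
  also have "\<dots> = 1 / ((real n)\<^sup>2 * \<bar>real_of_int z\<bar>)"
    using z by (simp add: field_simps power2_eq_square power3_eq_cube)
  also have "\<dots> \<le> 1 / (real n)\<^sup>2"
    using z assms by (intro divide_left_mono) auto
  finally show ?thesis .
qed (simp add: jump_weight_def)

lemma harm_le_1_plus_ln:
  assumes "n \<ge> 1"
  shows "(harm n :: real) \<le> 1 + ln (real n)"
  using euler_mascheroni_sequence_decreasing[of 1 n] assms by (simp add: harm_def)

lemma sum_jump_weight_le:
  assumes "n \<ge> 1" "finite Z"
  shows "(\<Sum>z\<in>Z. jump_weight n z) \<le> 2 * (2 + ln (real n)) / (real n)\<^sup>2"
proof -
  have head: "jump_weight n (int k) \<le> inverse (real k) / (real n)\<^sup>2" if "1 \<le> k" for k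
  proof -
    have "jump_weight n (int k) \<le> (real k / real n)\<^sup>2 / (real k) ^ 3"
      unfolding jump_weight_def by (simp add: divide_right_mono)
    also have "\<dots> = inverse (real k) / (real n)\<^sup>2"
      using that by (simp add: field_simps power2_eq_square power3_eq_cube)
    finally show ?thesis .
  qed
  have tail: "jump_weight n (int k) \<le> (1 / real n) / (real k)\<^sup>2" if "n < k" for k
  proof -
    have "jump_weight n (int k) \<le> 1 / (real k) ^ 3"
      unfolding jump_weight_def by (simp add: divide_right_mono)
    also have "\<dots> \<le> (1 / real n) / (real k)\<^sup>2"
      using that assms(1) by (simp add: field_simps power2_eq_square power3_eq_cube mult_mono)
    finally show ?thesis .
  qed
  have "(\<Sum>k=1..m. jump_weight n (int k)) \<le> (2 + ln (real n)) / (real n)\<^sup>2" for m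
  proof -
    have "(\<Sum>k=1..m. jump_weight n (int k))
        \<le> (\<Sum>k=1..n. inverse (real k) / (real n)\<^sup>2) + (1 / real n) / real n"
      using assms(1) jump_weight_nonneg head tail by (intro sum_le_head_plus_inverse_square_tail) auto
    also have "\<dots> = (harm n + 1) / (real n)\<^sup>2"
      by (simp add: harm_def sum_divide_distrib power2_eq_square add_divide_distrib)
    also have "\<dots> \<le> (2 + ln (real n)) / (real n)\<^sup>2"
      using harm_le_1_plus_ln[OF assms(1)] by (intro divide_right_mono) auto
    finally show ?thesis .
  qed
  then have "(\<Sum>z\<in>Z. jump_weight n z) \<le> jump_weight n 0 + 2 * ((2 + ln (real n)) / (real n)\<^sup>2)"
    using assms(2) jump_weight_nonneg by (intro sum_int_le_of_even) (auto simp: jump_weight_def)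
  then show ?thesis
    by (simp add: jump_weight_def)
qed

lemma c_gamma_nonneg: "c_gamma \<gamma> \<ge> 0"
  unfolding c_gamma_def by (simp add: infsum_nonneg)

lemma jump_p_nonneg: "jump_p \<gamma> z \<ge> 0"
  unfolding jump_p_def using c_gamma_nonneg by auto

lemma jump_p_mult_min_le:
  assumes "\<gamma> \<ge> 2"
  shows "jump_p \<gamma> z * min 1 ((real_of_int z / real n)\<^sup>2) \<le> c_gamma \<gamma> * jump_weight n z"
proof (cases "z = 0")
  case False
  then have z: "\<bar>real_of_int z\<bar> \<ge> 1"
    by linarith
  have "\<bar>real_of_int z\<bar> powr (-\<gamma> - 1) \<le> \<bar>real_of_int z\<bar> powr (-3)"
    using z assms by (intro powr_mono) auto
  also have "\<dots> = 1 / \<bar>real_of_int z\<bar> ^ 3"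
    using z by (simp add: powr_minus powr_realpow divide_inverse)
  finally have "jump_p \<gamma> z \<le> c_gamma \<gamma> / \<bar>real_of_int z\<bar> ^ 3"
    unfolding jump_p_def using False c_gamma_nonneg
    by (simp add: mult_left_mono divide_inverse)
  then have "jump_p \<gamma> z * min 1 ((real_of_int z / real n)\<^sup>2)
      \<le> c_gamma \<gamma> / \<bar>real_of_int z\<bar> ^ 3 * min 1 ((real_of_int z / real n)\<^sup>2)"
    by (rule mult_right_mono) simp
  then show ?thesis
    unfolding jump_weight_def by simp
qed (simp add: jump_p_def jump_weight_def)

section \<open>Squares of nonnegative double series\<close>

lemma nonneg_summable_on_infsum_le:
  fixes f :: "'a \<Rightarrow> real"
  assumes "\<And>x. x \<in> A \<Longrightarrow> f x \<ge> 0" and "\<And>F. finite F \<Longrightarrow> F \<subseteq> A \<Longrightarrow> sum f F \<le> b"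
  shows "f summable_on A" and "infsum f A \<le> b"
proof -
  show "f summable_on A"
    by (rule nonneg_bdd_above_summable_on) (use assms in \<open>auto intro!: bdd_aboveI2\<close>)
  then show "infsum f A \<le> b"
    by (rule infsum_le_finite_sums) (use assms in auto)
qed

lemma infsum_square_le:
  fixes f :: "'a \<Rightarrow> real"
  assumes "f summable_on A" and "\<And>x. x \<in> A \<Longrightarrow> 0 \<le> f x" and "\<And>x. x \<in> A \<Longrightarrow> f x \<le> s"
  shows "(\<Sum>\<^sub>\<infinity>x\<in>A. (f x)\<^sup>2) \<le> s * infsum f A"
proof -
  have le: "(f x)\<^sup>2 \<le> s * f x" if "x \<in> A" for x
    using assms(2,3)[OF that] by (simp add: power2_eq_square mult_right_mono)
  have summable: "(\<lambda>x. s * f x) summable_on A"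
    using assms(1) by (rule summable_on_cmult_right)
  have "(\<lambda>x. (f x)\<^sup>2) summable_on A"
    by (rule summable_on_comparison_test[OF summable]) (use le in auto)
  then have "(\<Sum>\<^sub>\<infinity>x\<in>A. (f x)\<^sup>2) \<le> (\<Sum>\<^sub>\<infinity>x\<in>A. s * f x)"
    using summable le by (rule infsum_mono)
  also have "\<dots> = s * infsum f A"
    by (rule infsum_cmult_right')
  finally show ?thesis .
qed

lemma infsum_squares_le_max_times_total:
  fixes g :: "'a \<Rightarrow> 'b \<Rightarrow> real"
  assumes nonneg: "\<And>x y. 0 \<le> g x y" and entry: "\<And>x y. g x y \<le> s"
    and row: "\<And>x Y. finite Y \<Longrightarrow> (\<Sum>y\<in>Y. g x y) \<le> I"
    and total: "\<And>F. finite F \<Longrightarrow> (\<Sum>(x, y)\<in>F. g x y) \<le> P"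
  shows "(\<Sum>\<^sub>\<infinity>(x, y)\<in>UNIV. (g x y)\<^sup>2) + (\<Sum>\<^sub>\<infinity>x\<in>UNIV. (\<Sum>\<^sub>\<infinity>y\<in>UNIV. g x y)\<^sup>2) \<le> (s + I) * P"
proof -
  let ?g = "\<lambda>(x, y). g x y"
  have s: "s \<ge> 0"
    using nonneg[of undefined undefined] entry[of undefined undefined] by linarith
  have I: "I \<ge> 0"
    using row[of "{}"] by simp
  have g: "?g summable_on UNIV" "infsum ?g UNIV \<le> P"
    using nonneg_summable_on_infsum_le[of UNIV ?g P] nonneg total by auto
  have rows: "g x summable_on UNIV" "infsum (g x) UNIV \<le> I" for x
    using nonneg_summable_on_infsum_le[of UNIV "g x" I] nonneg row by auto
  have "(\<Sum>\<^sub>\<infinity>(x, y)\<in>UNIV. (g x y)\<^sup>2) = (\<Sum>\<^sub>\<infinity>p\<in>UNIV. (?g p)\<^sup>2)"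
    by (simp add: case_prod_unfold)
  also have "\<dots> \<le> s * infsum ?g UNIV"
    using g nonneg entry by (intro infsum_square_le) auto
  finally have squares: "(\<Sum>\<^sub>\<infinity>(x, y)\<in>UNIV. (g x y)\<^sup>2) \<le> s * P"
    using g(2) s by (meson mult_left_mono order_trans)
  have "(\<Sum>\<^sub>\<infinity>x\<in>UNIV. (infsum (g x) UNIV)\<^sup>2) \<le> I * (\<Sum>\<^sub>\<infinity>x\<in>UNIV. infsum (g x) UNIV)"
    using g(1) rows nonneg
    by (intro infsum_square_le infsum_nonneg
        summable_on_Sigma_banach[where B = "\<lambda>_. UNIV", simplified]) auto
  also have "(\<Sum>\<^sub>\<infinity>x\<in>UNIV. infsum (g x) UNIV) = infsum ?g UNIV"
    using infsum_Sigma'_banach[of g UNIV "\<lambda>_. UNIV"] g(1) by simp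
  finally have row_squares: "(\<Sum>\<^sub>\<infinity>x\<in>UNIV. (infsum (g x) UNIV)\<^sup>2) \<le> I * P"
    using g(2) I by (meson mult_left_mono order_trans)
  show ?thesis
    using squares row_squares by (simp add: distrib_right)
qed

section \<open>Weighted squared increments of G\<close>

definition weighted_sq_increment :: "real \<Rightarrow> (real \<Rightarrow> real) \<Rightarrow> nat \<Rightarrow> int \<Rightarrow> int \<Rightarrow> real" where
  "weighted_sq_increment \<gamma> G n x y =
     jump_p \<gamma> (y - x) * (G (real_of_int y / real n) - G (real_of_int x / real n))\<^sup>2"

lemma weighted_sq_increment_nonneg: "weighted_sq_increment \<gamma> G n x y \<ge> 0"
  unfolding weighted_sq_increment_def by (simp add: jump_p_nonneg)

context
  fixes \<gamma> L :: real and G :: "real \<Rightarrow> real" and n :: nat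
  assumes \<gamma>: "\<gamma> \<ge> 2" and L: "L \<ge> 0" and n: "n \<ge> 1"
    and increment: "\<And>u h. (G (u + h) - G u)\<^sup>2 \<le> L * min 1 (h\<^sup>2) * (lorentzian u + lorentzian (u + h))"
begin

lemma weighted_sq_increment_le_lorentzian:
  "weighted_sq_increment \<gamma> G n x y
     \<le> c_gamma \<gamma> * L * jump_weight n (y - x)
        * (lorentzian (real_of_int x / real n) + lorentzian (real_of_int y / real n))"
proof -
  define u h where "u = real_of_int x / real n" and "h = real_of_int (y - x) / real n"
  have y: "real_of_int y / real n = u + h"
    unfolding u_def h_def by (simp add: diff_divide_distrib)
  have "weighted_sq_increment \<gamma> G n x y = jump_p \<gamma> (y - x) * (G (u + h) - G u)\<^sup>2"
    unfolding weighted_sq_increment_def y u_def ..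
  also have "\<dots> \<le> jump_p \<gamma> (y - x) * (L * min 1 (h\<^sup>2) * (lorentzian u + lorentzian (u + h)))"
    by (intro mult_left_mono increment jump_p_nonneg)
  also have "\<dots> = L * (jump_p \<gamma> (y - x) * min 1 (h\<^sup>2)) * (lorentzian u + lorentzian (u + h))"
    by simp
  also have "\<dots> \<le> L * (c_gamma \<gamma> * jump_weight n (y - x)) * (lorentzian u + lorentzian (u + h))"
  proof -
    have "jump_p \<gamma> (y - x) * min 1 (h\<^sup>2) \<le> c_gamma \<gamma> * jump_weight n (y - x)"
      unfolding h_def by (rule jump_p_mult_min_le[OF \<gamma>])
    moreover have "0 \<le> lorentzian u + lorentzian (u + h)"
      using lorentzian_pos[of u] lorentzian_pos[of "u + h"] by linarith
    ultimately show ?thesis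
      using L by (intro mult_right_mono mult_left_mono)
  qed
  finally show ?thesis
    unfolding y u_def[symmetric] by (simp add: mult_ac)
qed

lemma weighted_sq_increment_le_jump_weight:
  "weighted_sq_increment \<gamma> G n x y \<le> 2 * c_gamma \<gamma> * L * jump_weight n (y - x)"
proof -
  have "lorentzian (real_of_int x / real n) + lorentzian (real_of_int y / real n) \<le> 2"
    using lorentzian_le_1 by (smt (verit))
  then have "c_gamma \<gamma> * L * jump_weight n (y - x)
      * (lorentzian (real_of_int x / real n) + lorentzian (real_of_int y / real n))
      \<le> c_gamma \<gamma> * L * jump_weight n (y - x) * 2"
    using c_gamma_nonneg L jump_weight_nonneg by (intro mult_left_mono) auto
  then show ?thesis
    using weighted_sq_increment_le_lorentzian[of x y] by simp
qed

lemma weighted_sq_increment_le: "weighted_sq_increment \<gamma> G n x y \<le> 2 * c_gamma \<gamma> * L / (real n)\<^sup>2"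
proof -
  have "2 * c_gamma \<gamma> * L * jump_weight n (y - x) \<le> 2 * c_gamma \<gamma> * L * (1 / (real n)\<^sup>2)"
    using jump_weight_le[OF n] c_gamma_nonneg L by (intro mult_left_mono) auto
  then show ?thesis
    using weighted_sq_increment_le_jump_weight[of x y] by simp
qed

lemma sum_weighted_sq_increment_row_le:
  assumes "finite Y"
  shows "(\<Sum>y\<in>Y. weighted_sq_increment \<gamma> G n x y) \<le> 4 * c_gamma \<gamma> * L * (2 + ln (real n)) / (real n)\<^sup>2"
proof -
  have "(\<Sum>y\<in>Y. weighted_sq_increment \<gamma> G n x y) \<le> (\<Sum>y\<in>Y. 2 * c_gamma \<gamma> * L * jump_weight n (y - x))"
    by (intro sum_mono weighted_sq_increment_le_jump_weight)
  also have "\<dots> = 2 * c_gamma \<gamma> * L * (\<Sum>z\<in>(\<lambda>y. y - x) ` Y. jump_weight n z)"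
    by (simp add: sum.reindex inj_on_def sum_distrib_left)
  also have "\<dots> \<le> 2 * c_gamma \<gamma> * L * (2 * (2 + ln (real n)) / (real n)\<^sup>2)"
    using sum_jump_weight_le[OF n] assms c_gamma_nonneg L by (intro mult_left_mono) auto
  finally show ?thesis
    by (simp add: field_simps)
qed

lemma sum_weighted_sq_increment_diagonal_le:
  assumes "finite X"
  shows "(\<Sum>x\<in>X. weighted_sq_increment \<gamma> G n x (x + z))
    \<le> 2 * c_gamma \<gamma> * L * (1 + 4 * real n) * jump_weight n z"
proof -
  let ?\<phi> = "\<lambda>a x. lorentzian (real_of_int (x + a) / real n)"
  have "(\<Sum>x\<in>X. weighted_sq_increment \<gamma> G n x (x + z))
      \<le> (\<Sum>x\<in>X. c_gamma \<gamma> * L * jump_weight n z * (?\<phi> 0 x + ?\<phi> z x))"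
  proof (rule sum_mono)
    fix x
    show "weighted_sq_increment \<gamma> G n x (x + z) \<le> c_gamma \<gamma> * L * jump_weight n z * (?\<phi> 0 x + ?\<phi> z x)"
      using weighted_sq_increment_le_lorentzian[of x "x + z"] by simp
  qed
  also have "\<dots> = c_gamma \<gamma> * L * jump_weight n z * ((\<Sum>x\<in>X. ?\<phi> 0 x) + (\<Sum>x\<in>X. ?\<phi> z x))"
    by (simp only: sum_distrib_left[symmetric] sum.distrib[symmetric])
  also have "\<dots> \<le> c_gamma \<gamma> * L * jump_weight n z * (2 * (1 + 4 * real n))"
    using sum_lorentzian_lattice_le[OF n assms, of 0] sum_lorentzian_lattice_le[OF n assms, of z]
      c_gamma_nonneg L jump_weight_nonneg
    by (intro mult_left_mono) auto
  finally show ?thesis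
    by (simp add: mult_ac)
qed

lemma sum_weighted_sq_increment_le:
  assumes "finite F"
  shows "(\<Sum>(x, y)\<in>F. weighted_sq_increment \<gamma> G n x y)
    \<le> 4 * c_gamma \<gamma> * L * (1 + 4 * real n) * (2 + ln (real n)) / (real n)\<^sup>2"
proof -
  let ?w = "\<lambda>x z. weighted_sq_increment \<gamma> G n x (x + z)"
  let ?C = "2 * c_gamma \<gamma> * L * (1 + 4 * real n)"
  define X Z where "X = fst ` F" and "Z = (\<lambda>(x, y). y - x) ` F"
  have X: "finite X" and Z: "finite Z"
    using assms by (auto simp: X_def Z_def)
  have inj: "inj_on (\<lambda>(x, y). (x, y - x)) F"
    by (auto simp: inj_on_def)
  have "(\<Sum>(x, y)\<in>F. weighted_sq_increment \<gamma> G n x y) = (\<Sum>(x, z)\<in>(\<lambda>(x, y). (x, y - x)) ` F. ?w x z)"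
    by (subst sum.reindex[OF inj]) (auto intro!: sum.cong)
  also have "\<dots> \<le> (\<Sum>(x, z)\<in>X \<times> Z. ?w x z)"
    using X Z by (intro sum_mono2) (auto simp: weighted_sq_increment_nonneg X_def Z_def rev_image_eqI)
  also have "\<dots> = (\<Sum>z\<in>Z. \<Sum>x\<in>X. ?w x z)"
    by (subst sum.swap) (simp add: sum.cartesian_product)
  also have "\<dots> \<le> (\<Sum>z\<in>Z. ?C * jump_weight n z)"
    by (intro sum_mono sum_weighted_sq_increment_diagonal_le X)
  also have "\<dots> = ?C * (\<Sum>z\<in>Z. jump_weight n z)"
    by (simp add: sum_distrib_left)
  also have "\<dots> \<le> ?C * (2 * (2 + ln (real n)) / (real n)\<^sup>2)"
    using sum_jump_weight_le[OF n Z] c_gamma_nonneg L by (intro mult_left_mono) auto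
  finally show ?thesis
    by (simp add: algebra_simps add_divide_distrib)
qed

lemma jump_sums_le:
  "(\<Sum>\<^sub>\<infinity>(x, y)\<in>(UNIV :: (int \<times> int) set).
      (G (real_of_int y / real n) - G (real_of_int x / real n)) ^ 4 * (jump_p \<gamma> (y - x))\<^sup>2)
   + (\<Sum>\<^sub>\<infinity>x\<in>(UNIV :: int set). (\<Sum>\<^sub>\<infinity>y\<in>(UNIV :: int set).
      jump_p \<gamma> (y - x) * (G (real_of_int y / real n) - G (real_of_int x / real n))\<^sup>2)\<^sup>2)
   \<le> 8 * (c_gamma \<gamma> * L)\<^sup>2 * ((5 + 2 * ln (real n)) * (1 + 4 * real n) * (2 + ln (real n)) / real n ^ 4)"
proof -
  have "(G (real_of_int y / real n) - G (real_of_int x / real n)) ^ 4 * (jump_p \<gamma> (y - x))\<^sup>2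
      = (weighted_sq_increment \<gamma> G n x y)\<^sup>2" for x y
    unfolding weighted_sq_increment_def power_mult_distrib by (simp add: mult.commute flip: power_mult)
  then have "(\<Sum>\<^sub>\<infinity>(x, y)\<in>(UNIV :: (int \<times> int) set).
      (G (real_of_int y / real n) - G (real_of_int x / real n)) ^ 4 * (jump_p \<gamma> (y - x))\<^sup>2)
   + (\<Sum>\<^sub>\<infinity>x\<in>(UNIV :: int set). (\<Sum>\<^sub>\<infinity>y\<in>(UNIV :: int set).
      jump_p \<gamma> (y - x) * (G (real_of_int y / real n) - G (real_of_int x / real n))\<^sup>2)\<^sup>2)
    = (\<Sum>\<^sub>\<infinity>(x, y)\<in>UNIV. (weighted_sq_increment \<gamma> G n x y)\<^sup>2)
      + (\<Sum>\<^sub>\<infinity>x\<in>UNIV. (\<Sum>\<^sub>\<infinity>y\<in>UNIV. weighted_sq_increment \<gamma> G n x y)\<^sup>2)"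
    by (simp add: weighted_sq_increment_def)
  also have "\<dots> \<le> (2 * c_gamma \<gamma> * L / (real n)\<^sup>2 + 4 * c_gamma \<gamma> * L * (2 + ln (real n)) / (real n)\<^sup>2)
      * (4 * c_gamma \<gamma> * L * (1 + 4 * real n) * (2 + ln (real n)) / (real n)\<^sup>2)"
    by (rule infsum_squares_le_max_times_total[OF weighted_sq_increment_nonneg weighted_sq_increment_le
        sum_weighted_sq_increment_row_le sum_weighted_sq_increment_le])
  also have "\<dots> = 8 * (c_gamma \<gamma> * L)\<^sup>2
      * ((5 + 2 * ln (real n)) * (1 + 4 * real n) * (2 + ln (real n)) / real n ^ 4)"
    using n by (simp add: field_simps power2_eq_square power4_eq_xxxx)
  finally show ?thesis .
qed

end

lemma Theta_sq_div_sq_le: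
  assumes "n \<ge> 3"
  shows "(Theta \<gamma> n)\<^sup>2 / (real n)\<^sup>2 \<le> (real n)\<^sup>2"
proof (cases "\<gamma> > 2")
  case False
  have "exp 1 \<le> real n"
    using exp_le assms by linarith
  then have "ln (real n) \<ge> 1"
    using ln_ge_iff[of "real n" 1] assms by simp
  then have "(Theta \<gamma> n)\<^sup>2 / (real n)\<^sup>2 = (real n)\<^sup>2 / (ln (real n))\<^sup>2"
    using False assms by (simp add: Theta_def power2_eq_square field_simps)
  also have "\<dots> \<le> (real n)\<^sup>2"
    using \<open>ln (real n) \<ge> 1\<close> one_le_power[of "ln (real n)" 2] by (simp add: divide_le_eq mult_le_cancel_left1)
  finally show ?thesis .
qed (use assms in \<open>simp add: Theta_def power2_eq_square\<close>)

theorem propositionA6: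
  fixes \<gamma> :: real and G :: "real \<Rightarrow> real"
  assumes "\<gamma> \<ge> 2" and "schwartz G"
  shows "(\<lambda>n::nat. (Theta \<gamma> n)\<^sup>2 / (real n)\<^sup>2 *
     ((\<Sum>\<^sub>\<infinity>(x, y)\<in>(UNIV :: (int \<times> int) set).
          (G (real_of_int y / real n) - G (real_of_int x / real n)) ^ 4 * (jump_p \<gamma> (y - x))\<^sup>2)
      + (\<Sum>\<^sub>\<infinity>x\<in>(UNIV :: int set).
          (\<Sum>\<^sub>\<infinity>y\<in>(UNIV :: int set).
              jump_p \<gamma> (y - x) * (G (real_of_int y / real n) - G (real_of_int x / real n))\<^sup>2)\<^sup>2)))
     \<longlonglongrightarrow> 0"
  (is "(\<lambda>n. ?\<Theta> n * ?S n) \<longlonglongrightarrow> 0")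
proof -
  obtain L where L: "L \<ge> 0"
    and increment: "\<And>u h. (G (u + h) - G u)\<^sup>2 \<le> L * min 1 (h\<^sup>2) * (lorentzian u + lorentzian (u + h))"
    using schwartz_increment_sq_le[OF assms(2)] by blast
  define R where "R n = (5 + 2 * ln (real n)) * (1 + 4 * real n) * (2 + ln (real n)) / real n ^ 4" for n :: nat
  have S: "0 \<le> ?S n" "?S n \<le> 8 * (c_gamma \<gamma> * L)\<^sup>2 * R n" if "n \<ge> 1" for n
    using jump_sums_le[OF assms(1) L that increment] unfolding R_def
    by (auto intro!: add_nonneg_nonneg infsum_nonneg simp: jump_p_nonneg)
  have "(\<lambda>n. (real n)\<^sup>2 * R n) \<longlonglongrightarrow> 0"
    unfolding R_def by real_asymp
  then have bound: "(\<lambda>n. 8 * (c_gamma \<gamma> * L)\<^sup>2 * ((real n)\<^sup>2 * R n)) \<longlonglongrightarrow> 0"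
    by (rule tendsto_mult_right_zero)
  show ?thesis
  proof (rule tendsto_sandwich[OF _ _ tendsto_const bound])
    show "\<forall>\<^sub>F n in sequentially. 0 \<le> ?\<Theta> n * ?S n"
      using eventually_ge_at_top[of 1] by eventually_elim (use S in auto)
    show "\<forall>\<^sub>F n in sequentially. ?\<Theta> n * ?S n \<le> 8 * (c_gamma \<gamma> * L)\<^sup>2 * ((real n)\<^sup>2 * R n)"
      using eventually_ge_at_top[of 3]
    proof eventually_elim
      case (elim n)
      then have "?\<Theta> n * ?S n \<le> (real n)\<^sup>2 * (8 * (c_gamma \<gamma> * L)\<^sup>2 * R n)"
        using Theta_sq_div_sq_le S[of n] by (intro mult_mono) auto
      then show ?case
        by (simp add: mult_ac)
    qed
  qed
qed

end
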